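(* Fix a nonempty $A\subseteq S$ and $w\in A$, and let $E_0=\{\tau_{\mathcal E_N^w}=\tau_{\mathcal E_N(A)}\}$. Let $x,y\in S$ be distinct with $r(x,y)=r(y,x)>0$. Then, as $N\to\infty$, $$\Big|\mathbb P_{\zeta_1^{x,y}}[E_0]-\frac{N-1}{N}\mathbb P_{\xi_N^x}[E_0]-\frac1N\mathbb P_{\xi_N^y}[E_0]\Big|=O(d_N\log N).$$
   Context: $S$ is finite; $r:S\times S\to[0,\infty)$, $r(x,x)=0$, are the rates of an irreducible continuous-time Markov chain on $S$. $\mathcal H_N=\{\eta\in\{0,1,2,\dots\}^S:\sum_x\eta_x=N\}$; $\sigma^{x,y}\eta$ moves one particle from $x$ to $y$ (if $\eta_x\ge1$; else $\sigma^{x,y}\eta=\eta$). With $d_N>0$, $d_N\to0$, the inclusion process is the Markov chain on $\mathcal H_N$ with generator $(\mathcal L_NF)(\eta)=\sum_{x\ne y}\eta_x(d_N+\eta_y)r(x,y)\{F(\sigma^{x,y}\eta)-F(\eta)\}$; $\mathbb P_\eta$ its law from $\eta$; $\tau_{\mathcal C}$ the hitting time of $\mathcal C\subseteq\mathcal H_N$. $\xi_N^z$: all $N$ particles at $z$; $\mathcal E_N^z=\{\xi_N^z\}$, $\mathcal E_N(A)=\bigcup_{z\in A}\mathcal E_N^z$. For $0\le i\le N$, $\zeta_i^{x,y}$ is the configuration with $N-i$ particles at $x$, $i$ at $y$, none elsewhere. $O(\cdot)$ has constant independent of $N$. *)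

theory Defs
  imports "HOL-Analysis.Analysis" "HOL-Library.Landau_Symbols"
begin

text \<open>Configurations of particles on the finite site set (a finite type 's) are
functions 's \<Rightarrow> nat; the process started in H_N stays in H_N.\<close>

definition move :: "'s \<Rightarrow> 's \<Rightarrow> ('s \<Rightarrow> nat) \<Rightarrow> ('s \<Rightarrow> nat)" where
  "move x y \<eta> = (if 1 \<le> \<eta> x then \<eta>(x := \<eta> x - 1, y := \<eta> y + 1) else \<eta>)"

definition xi :: "nat \<Rightarrow> 's \<Rightarrow> ('s \<Rightarrow> nat)" where
  "xi N z = (\<lambda>v. if v = z then N else 0)"

definition zeta :: "nat \<Rightarrow> nat \<Rightarrow> 's \<Rightarrow> 's \<Rightarrow> ('s \<Rightarrow> nat)" where
  "zeta N i x y = (\<lambda>v. if v = x then N - i else if v = y then i else 0)"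

definition condensate :: "nat \<Rightarrow> 's set \<Rightarrow> ('s \<Rightarrow> nat) set" where
  "condensate N A = (\<Union>z\<in>A. {xi N z})"

definition incl_rate :: "(nat \<Rightarrow> real) \<Rightarrow> ('s \<Rightarrow> 's \<Rightarrow> real) \<Rightarrow> nat \<Rightarrow> ('s \<Rightarrow> nat) \<Rightarrow> 's \<Rightarrow> 's \<Rightarrow> real" where
  "incl_rate d r N \<eta> x y = (if x = y then 0 else real (\<eta> x) * (d N + real (\<eta> y)) * r x y)"

definition incl_total_rate :: "(nat \<Rightarrow> real) \<Rightarrow> ('s::finite \<Rightarrow> 's \<Rightarrow> real) \<Rightarrow> nat \<Rightarrow> ('s \<Rightarrow> nat) \<Rightarrow> real" where
  "incl_total_rate d r N \<eta> = (\<Sum>x\<in>UNIV. \<Sum>y\<in>UNIV. incl_rate d r N \<eta> x y)"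

text \<open>hit_prob_upto d r N C B n eta: probability, for the jump chain of the inclusion process
started at eta, that the set C is hit within the first n jumps and that the state at the
hitting time tau_C lies in B.\<close>
fun hit_prob_upto :: "(nat \<Rightarrow> real) \<Rightarrow> ('s::finite \<Rightarrow> 's \<Rightarrow> real) \<Rightarrow> nat \<Rightarrow> ('s \<Rightarrow> nat) set
    \<Rightarrow> ('s \<Rightarrow> nat) set \<Rightarrow> nat \<Rightarrow> ('s \<Rightarrow> nat) \<Rightarrow> real" where
  "hit_prob_upto d r N C B 0 \<eta> = (if \<eta> \<in> C \<and> \<eta> \<in> B then 1 else 0)"
| "hit_prob_upto d r N C B (Suc n) \<eta> =
     (if \<eta> \<in> C then (if \<eta> \<in> B then 1 else 0)
      else (\<Sum>x\<in>UNIV. \<Sum>y\<in>UNIV.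
              incl_rate d r N \<eta> x y / incl_total_rate d r N \<eta> * hit_prob_upto d r N C B n (move x y \<eta>)))"

text \<open>P_eta[ tau_C < \<infinity> and X(tau_C) \<in> B ] for the inclusion process (the event only
depends on the embedded jump chain).\<close>
definition hit_prob :: "(nat \<Rightarrow> real) \<Rightarrow> ('s::finite \<Rightarrow> 's \<Rightarrow> real) \<Rightarrow> nat \<Rightarrow> ('s \<Rightarrow> nat) set
    \<Rightarrow> ('s \<Rightarrow> nat) set \<Rightarrow> ('s \<Rightarrow> nat) \<Rightarrow> real" where
  "hit_prob d r N C B \<eta> = (SUP n. hit_prob_upto d r N C B n \<eta>)"

text \<open>P_eta[E_0] with E_0 = {tau_{E_N^w} = tau_{E_N(A)}}: E_N(A) is hit (a.s. finite time)
and it is hit at xi_N^w.\<close>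
definition E0_prob :: "(nat \<Rightarrow> real) \<Rightarrow> ('s::finite \<Rightarrow> 's \<Rightarrow> real) \<Rightarrow> nat \<Rightarrow> 's set \<Rightarrow> 's
    \<Rightarrow> ('s \<Rightarrow> nat) \<Rightarrow> real" where
  "E0_prob d r N A w \<eta> = hit_prob d r N (condensate N A) {xi N w} \<eta>"

end

theory Submission
  imports Defs
begin

(*
  Write zeta_k for the configuration with N - k particles at x and k at y, q = r(x,y), and
  h_k = P_{zeta_k}[E_0].  Along the segment zeta_0, ..., zeta_N the jump chain moves right at
  rate q (N - k)(d_N + k) and left at rate q k (d_N + N - k); every other move starts or ends at
  an empty site, so leaves the segment at total rate O(N d_N).  Hence h solves a birth-death
  equation perturbed by O(N d_N), and its deviation f from the chord through h_0 and h_N solves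
  that equation with right-hand side O(N d_N) and zero boundary values.  The barrier
  phi_k = k (H_N - H_k) + (N - k)(H_N - H_(N-k)) has second difference -(1/k + 1/(N - k)), which
  the rates turn into a drift of order N, so a maximum principle yields
  |f_1| <= C d_N phi_1 <= C d_N H_N = O(d_N log N).
*)

locale nonneg_rates =
  fixes r :: "'s::finite \<Rightarrow> 's \<Rightarrow> real" and d :: "nat \<Rightarrow> real"
  assumes r_nonneg: "r a b \<ge> 0" and d_nonneg: "d n \<ge> 0"
begin

lemma incl_rate_nonneg: "incl_rate d r N \<eta> x y \<ge> 0"
  using r_nonneg d_nonneg by (simp add: incl_rate_def)

lemma jump_prob_nonneg: "incl_rate d r N \<eta> x y / incl_total_rate d r N \<eta> \<ge> 0"
  unfolding incl_total_rate_def by (intro divide_nonneg_nonneg sum_nonneg incl_rate_nonneg)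

lemma sum_jump_prob_le_1:
  "(\<Sum>x\<in>UNIV. \<Sum>y\<in>UNIV. incl_rate d r N \<eta> x y / incl_total_rate d r N \<eta>) \<le> 1"
proof -
  have "(\<Sum>x\<in>UNIV. \<Sum>y\<in>UNIV. incl_rate d r N \<eta> x y / incl_total_rate d r N \<eta>)
      = incl_total_rate d r N \<eta> / incl_total_rate d r N \<eta>"
    by (simp add: incl_total_rate_def sum_divide_distrib[symmetric])
  then show ?thesis by simp
qed

lemma hit_prob_upto_bounds: "0 \<le> hit_prob_upto d r N C B n \<eta> \<and> hit_prob_upto d r N C B n \<eta> \<le> 1"
proof (induction n arbitrary: \<eta>)
  case 0
  show ?case by simp
next
  case (Suc n)
  let ?p = "\<lambda>x y. incl_rate d r N \<eta> x y / incl_total_rate d r N \<eta>"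
  have "0 \<le> (\<Sum>x\<in>UNIV. \<Sum>y\<in>UNIV. ?p x y * hit_prob_upto d r N C B n (move x y \<eta>))"
    using Suc jump_prob_nonneg by (intro sum_nonneg mult_nonneg_nonneg) auto
  moreover have "(\<Sum>x\<in>UNIV. \<Sum>y\<in>UNIV. ?p x y * hit_prob_upto d r N C B n (move x y \<eta>))
      \<le> (\<Sum>x\<in>UNIV. \<Sum>y\<in>UNIV. ?p x y)"
    using Suc jump_prob_nonneg by (intro sum_mono mult_left_le) auto
  ultimately show ?case
    using sum_jump_prob_le_1[of N \<eta>] by (auto simp del: hit_prob_upto.simps(1))
qed

lemma hit_prob_upto_le_Suc: "hit_prob_upto d r N C B n \<eta> \<le> hit_prob_upto d r N C B (Suc n) \<eta>"
proof (induction n arbitrary: \<eta>)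
  case 0
  then show ?case using hit_prob_upto_bounds[of N C B "Suc 0" \<eta>] by (cases "\<eta> \<in> C") auto
next
  case (Suc n)
  have "(\<Sum>x\<in>UNIV. \<Sum>y\<in>UNIV. incl_rate d r N \<eta> x y / incl_total_rate d r N \<eta>
           * hit_prob_upto d r N C B n (move x y \<eta>))
      \<le> (\<Sum>x\<in>UNIV. \<Sum>y\<in>UNIV. incl_rate d r N \<eta> x y / incl_total_rate d r N \<eta>
           * hit_prob_upto d r N C B (Suc n) (move x y \<eta>))"
    using Suc jump_prob_nonneg by (intro sum_mono mult_left_mono) auto
  then show ?case by (simp only: hit_prob_upto.simps(2)) simp
qed

lemma hit_prob_upto_tendsto: "(\<lambda>n. hit_prob_upto d r N C B n \<eta>) \<longlonglongrightarrow> hit_prob d r N C B \<eta>"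
  unfolding hit_prob_def
  using hit_prob_upto_bounds hit_prob_upto_le_Suc
  by (intro LIMSEQ_incseq_SUP incseq_SucI bdd_aboveI) blast+

lemma hit_prob_bounds: "0 \<le> hit_prob d r N C B \<eta> \<and> hit_prob d r N C B \<eta> \<le> 1"
  using hit_prob_upto_tendsto hit_prob_upto_bounds by (meson LIMSEQ_le_const LIMSEQ_le_const2)

lemma hit_prob_step:
  assumes "\<eta> \<notin> C"
  shows "hit_prob d r N C B \<eta> = (\<Sum>x\<in>UNIV. \<Sum>y\<in>UNIV.
           incl_rate d r N \<eta> x y / incl_total_rate d r N \<eta> * hit_prob d r N C B (move x y \<eta>))"
proof (rule LIMSEQ_unique)
  show "(\<lambda>n. hit_prob_upto d r N C B (Suc n) \<eta>) \<longlonglongrightarrow> hit_prob d r N C B \<eta>"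
    using hit_prob_upto_tendsto by (rule LIMSEQ_Suc)
  show "(\<lambda>n. hit_prob_upto d r N C B (Suc n) \<eta>) \<longlonglongrightarrow> (\<Sum>x\<in>UNIV. \<Sum>y\<in>UNIV.
           incl_rate d r N \<eta> x y / incl_total_rate d r N \<eta> * hit_prob d r N C B (move x y \<eta>))"
    using assms by (simp only: hit_prob_upto.simps(2) if_False)
      (intro tendsto_sum tendsto_mult_left hit_prob_upto_tendsto)
qed

end

lemma zeta_0: "zeta N 0 x y = xi N x"
  by (auto simp: zeta_def xi_def)

lemma zeta_self: "x \<noteq> y \<Longrightarrow> zeta N N x y = xi N y"
  by (auto simp: zeta_def xi_def)

lemma move_zeta_forward: "x \<noteq> y \<Longrightarrow> k < N \<Longrightarrow> move x y (zeta N k x y) = zeta N (k + 1) x y"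
  by (auto simp: move_def zeta_def fun_eq_iff)

lemma move_zeta_backward:
  "x \<noteq> y \<Longrightarrow> 0 < k \<Longrightarrow> k \<le> N \<Longrightarrow> move y x (zeta N k x y) = zeta N (k - 1) x y"
  by (auto simp: move_def zeta_def fun_eq_iff)

lemma zeta_notin_condensate:
  assumes "x \<noteq> y" "0 < k" "k < N"
  shows "zeta N k x y \<notin> condensate N A"
proof
  assume "zeta N k x y \<in> condensate N A"
  then obtain z where "zeta N k x y = xi N z" by (auto simp: condensate_def)
  then have "zeta N k x y x = xi N z x" "zeta N k x y y = xi N z y" by simp_all
  with assms show False by (auto simp: zeta_def xi_def split: if_splits)
qed

lemma sum_sum_split_pair:
  fixes f :: "'s::finite \<Rightarrow> 's \<Rightarrow> 'a::comm_monoid_add"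
  assumes "x \<noteq> y"
  shows "(\<Sum>u\<in>UNIV. \<Sum>v\<in>UNIV. f u v) = f x y + f y x + (\<Sum>(u, v)\<in>UNIV - {(x, y), (y, x)}. f u v)"
proof -
  have "(\<Sum>u\<in>UNIV. \<Sum>v\<in>UNIV. f u v) = (\<Sum>(u, v)\<in>UNIV. f u v)"
    by (simp add: sum.cartesian_product)
  also have "\<dots> = (\<Sum>(u, v)\<in>{(x, y), (y, x)}. f u v) + (\<Sum>(u, v)\<in>UNIV - {(x, y), (y, x)}. f u v)"
    using sum.subset_diff[of "{(x, y), (y, x)}" UNIV "\<lambda>(u, v). f u v"] by (simp add: add.commute)
  finally show ?thesis using assms by simp
qed

definition tridiag_op ::
    "(nat \<Rightarrow> real) \<Rightarrow> (nat \<Rightarrow> real) \<Rightarrow> (nat \<Rightarrow> real) \<Rightarrow> (nat \<Rightarrow> real) \<Rightarrow> nat \<Rightarrow> real" where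
  "tridiag_op T a b u k = T k * u k - a k * u (k + 1) - b k * u (k - 1)"

lemma tridiag_op_diff:
  "tridiag_op T a b (\<lambda>j. f j - g j) k = tridiag_op T a b f k - tridiag_op T a b g k"
  by (simp add: tridiag_op_def algebra_simps)

lemma tridiag_op_minus: "tridiag_op T a b (\<lambda>j. - f j) k = - tridiag_op T a b f k"
  by (simp add: tridiag_op_def algebra_simps)

lemma tridiag_max_principle:
  assumes sub: "\<And>k. 0 < k \<Longrightarrow> k < N \<Longrightarrow> tridiag_op T a b u k \<le> 0"
    and a_pos: "\<And>k. 0 < k \<Longrightarrow> k < N \<Longrightarrow> a k > 0"
    and b_nonneg: "\<And>k. 0 < k \<Longrightarrow> k < N \<Longrightarrow> b k \<ge> 0"
    and T_ge: "\<And>k. 0 < k \<Longrightarrow> k < N \<Longrightarrow> T k \<ge> a k + b k"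
    and "u 0 \<le> 0" "u N \<le> 0" "k \<le> N"
  shows "u k \<le> 0"
proof (rule ccontr)
  assume "\<not> u k \<le> 0"
  define M where "M = Max (u ` {0..N})"
  have u_le_M: "u j \<le> M" if "j \<le> N" for j
    unfolding M_def using that by (intro Max_ge) auto
  have "M \<in> u ` {0..N}"
    unfolding M_def by (intro Max_in) auto
  then have argmax_ne: "{j. j \<le> N \<and> u j = M} \<noteq> {}" by auto
  \<comment> \<open>at the rightmost maximiser the sub-solution inequality fails\<close>
  define m where "m = Max {j. j \<le> N \<and> u j = M}"
  have m: "m \<le> N" "u m = M"
    using Max_in[OF _ argmax_ne] unfolding m_def by auto
  have "M > 0" using u_le_M \<open>k \<le> N\<close> \<open>\<not> u k \<le> 0\<close> by force
  then have "u 0 < u m" "u N < u m"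
    using m \<open>u 0 \<le> 0\<close> \<open>u N \<le> 0\<close> by linarith+
  then have "m \<noteq> 0" "m \<noteq> N" by (metis less_irrefl)+
  then have m_inner: "0 < m" "m < N"
    using m by auto
  have "u (m + 1) \<noteq> M"
  proof
    assume "u (m + 1) = M"
    with m_inner have "m + 1 \<in> {j. j \<le> N \<and> u j = M}" by simp
    then have "m + 1 \<le> m"
      unfolding m_def by (intro Max_ge) auto
    then show False by simp
  qed
  then have right: "u (m + 1) < M" using u_le_M[of "m + 1"] m_inner by simp
  have left: "u (m - 1) \<le> M" using u_le_M m_inner by simp
  have "T m * M \<le> a m * u (m + 1) + b m * u (m - 1)"
    using sub[OF m_inner] m by (simp add: tridiag_op_def)
  also have "\<dots> < a m * M + b m * M"
    using mult_strict_left_mono[OF right a_pos[OF m_inner]]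
      mult_left_mono[OF left b_nonneg[OF m_inner]] by linarith
  also have "\<dots> \<le> T m * M"
    using T_ge[OF m_inner] \<open>M > 0\<close> by (simp add: distrib_right[symmetric])
  finally show False by simp
qed

lemma tridiag_comparison:
  assumes dominated: "\<And>k. 0 < k \<Longrightarrow> k < N \<Longrightarrow> \<bar>tridiag_op T a b f k\<bar> \<le> tridiag_op T a b \<phi> k"
    and "\<And>k. 0 < k \<Longrightarrow> k < N \<Longrightarrow> a k > 0"
    and "\<And>k. 0 < k \<Longrightarrow> k < N \<Longrightarrow> b k \<ge> 0"
    and "\<And>k. 0 < k \<Longrightarrow> k < N \<Longrightarrow> T k \<ge> a k + b k"
    and "\<bar>f 0\<bar> \<le> \<phi> 0" "\<bar>f N\<bar> \<le> \<phi> N" "k \<le> N"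
  shows "\<bar>f k\<bar> \<le> \<phi> k"
proof -
  have "f k - \<phi> k \<le> 0"
    by (rule tridiag_max_principle[where u = "\<lambda>j. f j - \<phi> j"])
      (use assms in \<open>auto simp: tridiag_op_diff abs_le_iff\<close>)
  moreover have "- f k - \<phi> k \<le> 0"
    by (rule tridiag_max_principle[where u = "\<lambda>j. - f j - \<phi> j"])
      (use assms in \<open>auto simp: tridiag_op_diff tridiag_op_minus abs_le_iff\<close>)
  ultimately show ?thesis by linarith
qed

definition harm_tail :: "nat \<Rightarrow> nat \<Rightarrow> real" where
  "harm_tail N j = real j * (harm N - harm j)"

lemma harm_tail_0 [simp]: "harm_tail N 0 = 0"
  and harm_tail_self [simp]: "harm_tail N N = 0"
  by (simp_all add: harm_tail_def)

lemma harm_tail_nonneg: "j \<le> N \<Longrightarrow> harm_tail N j \<ge> 0"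
  unfolding harm_tail_def using harm_mono[of j N] by (intro mult_nonneg_nonneg) auto

lemma harm_tail_second_diff:
  "harm_tail N (Suc (Suc k)) - 2 * harm_tail N (Suc k) + harm_tail N k = - 1 / real (Suc k)"
proof -
  define x where "x = real k"
  define p :: real where "p = harm N - harm k"
  have x: "x + 1 > 0" "x + 2 > 0" unfolding x_def by simp_all
  have "harm_tail N (Suc (Suc k)) - 2 * harm_tail N (Suc k) + harm_tail N k
      = (x + 2) * (p - inverse (x + 1) - inverse (x + 2)) - 2 * ((x + 1) * (p - inverse (x + 1))) + x * p"
    unfolding harm_tail_def harm_Suc x_def p_def by (simp add: algebra_simps)
  also have "\<dots> = 2 * ((x + 1) * inverse (x + 1)) - (x + 2) * inverse (x + 1) - (x + 2) * inverse (x + 2)"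
    by (simp add: algebra_simps)
  also have "\<dots> = - 1 / real (Suc k)"
    using x unfolding x_def by (simp add: field_simps)
  finally show ?thesis .
qed

lemma harm_tail_diff_bounds:
  assumes "Suc j \<le> N"
  shows "- 1 \<le> harm_tail N (Suc j) - harm_tail N j" "harm_tail N (Suc j) - harm_tail N j \<le> harm N"
proof -
  have "harm_tail N (Suc j) - harm_tail N j = harm N - harm (Suc j) - real j / real (Suc j)"
    unfolding harm_tail_def harm_Suc by (simp add: algebra_simps divide_inverse)
  moreover have "0 \<le> (harm (Suc j) :: real)" "harm (Suc j) \<le> (harm N :: real)"
    using harm_nonneg harm_mono[OF assms] by auto
  moreover have "0 \<le> real j / real (Suc j)" "real j / real (Suc j) \<le> 1" by simp_all
  ultimately show "- 1 \<le> harm_tail N (Suc j) - harm_tail N j"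
    "harm_tail N (Suc j) - harm_tail N j \<le> harm N" by linarith+
qed

definition harm_barrier :: "nat \<Rightarrow> nat \<Rightarrow> real" where
  "harm_barrier N k = harm_tail N k + harm_tail N (N - k)"

lemma harm_barrier_0 [simp]: "harm_barrier N 0 = 0"
  and harm_barrier_self [simp]: "harm_barrier N N = 0"
  by (simp_all add: harm_barrier_def)

lemma harm_barrier_nonneg: "k \<le> N \<Longrightarrow> harm_barrier N k \<ge> 0"
  unfolding harm_barrier_def by (intro add_nonneg_nonneg harm_tail_nonneg) auto

lemma harm_barrier_1_le: "N \<ge> 1 \<Longrightarrow> harm_barrier N 1 \<le> harm N"
proof -
  assume "N \<ge> 1"
  then obtain M where M: "N = Suc M" by (cases N) auto
  have "harm_barrier N 1 = harm N - 1 + real M * (harm N - harm M)"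
    unfolding harm_barrier_def harm_tail_def M by (simp add: harm_def)
  also have "harm N - harm M = 1 / real N"
    unfolding M harm_Suc by (simp add: field_simps)
  finally have "harm_barrier N 1 = harm N - 1 + real M / real N" by simp
  moreover have "real M / real N \<le> 1" using M by simp
  ultimately show ?thesis by linarith
qed

lemma harm_barrier_second_diff:
  assumes "0 < k" "k < N"
  shows "harm_barrier N (k + 1) - 2 * harm_barrier N k + harm_barrier N (k - 1)
    = - 1 / real k - 1 / real (N - k)"
proof -
  obtain i where i: "k = Suc i" using assms by (cases k) auto
  obtain j where j: "N - k = Suc j" using assms by (cases "N - k") auto
  have "N - (k + 1) = j" "N - (k - 1) = Suc (Suc j)" using j assms by auto
  then have "harm_tail N (N - (k + 1)) - 2 * harm_tail N (N - k) + harm_tail N (N - (k - 1))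
      = - 1 / real (N - k)"
    using harm_tail_second_diff[of N j] unfolding j by simp
  moreover have "harm_tail N (k + 1) - 2 * harm_tail N k + harm_tail N (k - 1) = - 1 / real k"
    using harm_tail_second_diff[of N i] unfolding i by simp
  ultimately show ?thesis unfolding harm_barrier_def by simp
qed

lemma harm_barrier_diff_abs_le:
  assumes "k < N"
  shows "\<bar>harm_barrier N (k + 1) - harm_barrier N k\<bar> \<le> harm N + 1"
proof -
  obtain j where j: "N - k = Suc j" using assms by (cases "N - k") auto
  then have "N - (k + 1) = j" "Suc j \<le> N" by simp_all
  then show ?thesis
    using harm_tail_diff_bounds[of k N] harm_tail_diff_bounds[of j N] assms j
    unfolding harm_barrier_def j by (simp add: abs_le_iff)
qed

definition up_rate :: "real \<Rightarrow> real \<Rightarrow> nat \<Rightarrow> nat \<Rightarrow> real" where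
  "up_rate q \<delta> N k = q * real (N - k) * (\<delta> + real k)"

definition down_rate :: "real \<Rightarrow> real \<Rightarrow> nat \<Rightarrow> nat \<Rightarrow> real" where
  "down_rate q \<delta> N k = q * real k * (\<delta> + real (N - k))"

lemma harm_barrier_drift_ge:
  assumes k: "0 < k" "k < N" and "q \<ge> 0" "\<delta> \<ge> 0"
  shows "up_rate q \<delta> N k * (harm_barrier N k - harm_barrier N (k + 1))
       + down_rate q \<delta> N k * (harm_barrier N k - harm_barrier N (k - 1))
     \<ge> q * real N * (1 - \<delta> * (harm N + 1))"
proof -
  define X where "X = harm_barrier N k - harm_barrier N (k + 1)"
  define Y where "Y = harm_barrier N k - harm_barrier N (k - 1)"
  have "X + Y = 1 / real k + 1 / real (N - k)"
    using harm_barrier_second_diff[OF k] unfolding X_def Y_def by simp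
  then have XY: "real k * real (N - k) * (X + Y) = real N"
    using k by (simp add: field_simps)
  have "\<bar>X\<bar> \<le> harm N + 1"
    using harm_barrier_diff_abs_le[of k N] k unfolding X_def by simp
  moreover have "\<bar>Y\<bar> \<le> harm N + 1"
    using harm_barrier_diff_abs_le[of "k - 1" N] k unfolding Y_def by (simp add: abs_minus_commute)
  ultimately have "real (N - k) * X \<ge> - (real (N - k) * (harm N + 1))"
      "real k * Y \<ge> - (real k * (harm N + 1))"
    by (simp_all add: abs_le_iff mult_left_mono flip: mult_minus_right)
  then have "real (N - k) * X + real k * Y \<ge> - (real N * (harm N + 1))"
    using k by (simp add: algebra_simps)
  then have "q * \<delta> * (real (N - k) * X + real k * Y) \<ge> q * \<delta> * (- (real N * (harm N + 1)))"
    using assms by (intro mult_left_mono) auto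
  moreover have "up_rate q \<delta> N k * X + down_rate q \<delta> N k * Y
      = q * (real k * real (N - k) * (X + Y)) + q * \<delta> * (real (N - k) * X + real k * Y)"
    unfolding up_rate_def down_rate_def by (simp add: algebra_simps)
  ultimately show ?thesis
    unfolding X_def[symmetric] Y_def[symmetric] XY by (simp add: algebra_simps)
qed

(* The first-step equation of a hitting probability h along a segment 0, ..., N of states, with
   c_k the total rate of jumps leaving the segment at k and e_k their contribution. *)
locale leaky_birth_death =
  fixes N :: nat and q \<delta> K :: real and h c e :: "nat \<Rightarrow> real"
  assumes N_ge_2: "N \<ge> 2" and q_pos: "q > 0" and \<delta>_pos: "\<delta> > 0" and K_nonneg: "K \<ge> 0"
    and h_bounds: "\<And>k. k \<le> N \<Longrightarrow> 0 \<le> h k \<and> h k \<le> 1"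
    and leak_bounds: "\<And>k. 0 < k \<Longrightarrow> k < N \<Longrightarrow> 0 \<le> e k \<and> e k \<le> c k \<and> c k \<le> real N * \<delta> * K"
    and h_equation: "\<And>k. 0 < k \<Longrightarrow> k < N \<Longrightarrow>
      tridiag_op (\<lambda>j. up_rate q \<delta> N j + down_rate q \<delta> N j + c j) (up_rate q \<delta> N) (down_rate q \<delta> N) h k = e k"
begin

abbreviation leaky_op :: "(nat \<Rightarrow> real) \<Rightarrow> nat \<Rightarrow> real" where
  "leaky_op \<equiv> tridiag_op (\<lambda>j. up_rate q \<delta> N j + down_rate q \<delta> N j + c j) (up_rate q \<delta> N) (down_rate q \<delta> N)"

definition chord :: "nat \<Rightarrow> real" where
  "chord k = h 0 + (h N - h 0) * real k / real N"

lemma chord_1: "chord 1 = real (N - 1) / real N * h 0 + 1 / real N * h N"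
  using N_ge_2 by (simp add: chord_def field_simps)

lemma chord_bounds:
  assumes "k \<le> N"
  shows "0 \<le> chord k \<and> chord k \<le> 1"
proof -
  define t where "t = real k / real N"
  have t: "0 \<le> t" "t \<le> 1" unfolding t_def using assms N_ge_2 by (auto simp: divide_le_eq_1)
  have "chord k = (1 - t) * h 0 + t * h N"
    unfolding chord_def t_def using N_ge_2 by (simp add: field_simps)
  moreover have "0 \<le> (1 - t) * h 0" "(1 - t) * h 0 \<le> 1 - t" "0 \<le> t * h N" "t * h N \<le> t"
    using h_bounds[of 0] h_bounds[of N] t by (auto intro: mult_left_le)
  ultimately show ?thesis by linarith
qed

lemma deviation_residual:
  assumes k: "0 < k" "k < N"
  shows "\<bar>leaky_op (\<lambda>j. h j - chord j) k\<bar> \<le> real N * \<delta> * (K + q)"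
proof -
  define s where "s = (h N - h 0) / real N"
  have chord_step: "chord (k + 1) = chord k + s" "chord (k - 1) = chord k - s"
    unfolding chord_def s_def using k by (simp_all add: field_simps)
  have "leaky_op chord k = c k * chord k - (up_rate q \<delta> N k - down_rate q \<delta> N k) * s"
    unfolding tridiag_op_def chord_step by (simp add: algebra_simps)
  then have split: "leaky_op (\<lambda>j. h j - chord j) k
      = (e k - c k * chord k) + (up_rate q \<delta> N k - down_rate q \<delta> N k) * s"
    using h_equation[OF k] by (simp add: tridiag_op_diff)
  have "0 \<le> c k * chord k" "c k * chord k \<le> c k"
    using chord_bounds[of k] leak_bounds[OF k] k by (auto intro: mult_left_le)
  then have leak: "\<bar>e k - c k * chord k\<bar> \<le> real N * \<delta> * K"
    using leak_bounds[OF k] by linarith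
  have "up_rate q \<delta> N k - down_rate q \<delta> N k = q * \<delta> * (real N - 2 * real k)"
    unfolding up_rate_def down_rate_def using k by (simp add: algebra_simps)
  moreover have "\<bar>real N - 2 * real k\<bar> * \<bar>h N - h 0\<bar> \<le> real N * 1"
    using k h_bounds[of 0] h_bounds[of N] by (intro mult_mono) auto
  ultimately have "\<bar>(up_rate q \<delta> N k - down_rate q \<delta> N k) * s\<bar> \<le> q * \<delta>"
    unfolding s_def using q_pos \<delta>_pos k by (simp add: abs_mult divide_le_eq mult.assoc)
  also have "\<dots> \<le> real N * \<delta> * q"
    using q_pos \<delta>_pos k by simp
  finally show ?thesis
    unfolding split using leak by (simp add: algebra_simps)
qed

lemma barrier_supersolution:
  assumes small: "\<delta> * (harm N + 1) \<le> 1 / 2" and k: "0 < k" "k < N"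
  shows "real N * \<delta> * (K + q) \<le> leaky_op (\<lambda>j. 2 * \<delta> * (K + q) / q * harm_barrier N j) k"
proof -
  define \<mu> where "\<mu> = 2 * \<delta> * (K + q) / q"
  have \<mu>: "\<mu> \<ge> 0" unfolding \<mu>_def using q_pos \<delta>_pos K_nonneg by simp
  have "leaky_op (\<lambda>j. \<mu> * harm_barrier N j) k = \<mu> * c k * harm_barrier N k
      + \<mu> * (up_rate q \<delta> N k * (harm_barrier N k - harm_barrier N (k + 1))
           + down_rate q \<delta> N k * (harm_barrier N k - harm_barrier N (k - 1)))"
    by (simp add: tridiag_op_def algebra_simps)
  moreover have "0 \<le> \<mu> * c k * harm_barrier N k"
    using \<mu> leak_bounds[OF k] harm_barrier_nonneg[of k N] k by simp
  moreover have "\<mu> * (q * real N * (1 / 2)) \<le> \<mu> * (q * real N * (1 - \<delta> * (harm N + 1)))"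
    using small \<mu> q_pos by (intro mult_left_mono) auto
  moreover have "\<mu> * (q * real N * (1 - \<delta> * (harm N + 1)))
      \<le> \<mu> * (up_rate q \<delta> N k * (harm_barrier N k - harm_barrier N (k + 1))
           + down_rate q \<delta> N k * (harm_barrier N k - harm_barrier N (k - 1)))"
    using harm_barrier_drift_ge[OF k] q_pos \<delta>_pos \<mu> by (intro mult_left_mono) auto
  moreover have "\<mu> * (q * real N * (1 / 2)) = real N * \<delta> * (K + q)"
    unfolding \<mu>_def using q_pos by simp
  ultimately show ?thesis unfolding \<mu>_def[symmetric] by linarith
qed

lemma deviation_at_1:
  "\<bar>h 1 - real (N - 1) / real N * h 0 - 1 / real N * h N\<bar> \<le> (2 * (K + q) / q + 2) * \<delta> * (harm N + 1)"
proof -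
  have H: "harm N \<ge> (0::real)" by (rule harm_nonneg)
  have "\<bar>h 1 - chord 1\<bar> \<le> (2 * (K + q) / q + 2) * \<delta> * (harm N + 1)"
  proof (cases "\<delta> * (harm N + 1) \<le> 1 / 2")
    case True
    define \<phi> where "\<phi> j = 2 * \<delta> * (K + q) / q * harm_barrier N j" for j
    have "\<bar>h 1 - chord 1\<bar> \<le> \<phi> 1"
    proof (rule tridiag_comparison[where f = "\<lambda>j. h j - chord j"])
      fix k assume k: "0 < k" "k < N"
      show "\<bar>leaky_op (\<lambda>j. h j - chord j) k\<bar> \<le> leaky_op \<phi> k"
        using deviation_residual[OF k] barrier_supersolution[OF True k] unfolding \<phi>_def by linarith
      show "up_rate q \<delta> N k > 0" "down_rate q \<delta> N k \<ge> 0"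
        using k q_pos \<delta>_pos by (simp_all add: up_rate_def down_rate_def)
      show "up_rate q \<delta> N k + down_rate q \<delta> N k + c k \<ge> up_rate q \<delta> N k + down_rate q \<delta> N k"
        using leak_bounds[OF k] by simp
    qed (use N_ge_2 in \<open>simp_all add: \<phi>_def chord_def\<close>)
    also have "\<dots> \<le> 2 * \<delta> * (K + q) / q * harm N"
      unfolding \<phi>_def using harm_barrier_1_le[of N] N_ge_2 q_pos \<delta>_pos K_nonneg
      by (intro mult_left_mono) auto
    also have "\<dots> \<le> (2 * (K + q) / q + 2) * \<delta> * (harm N + 1)"
      using q_pos \<delta>_pos K_nonneg H by (intro mult_mono) (auto simp: field_simps)
    finally show ?thesis .
  next
    case False
    have "\<bar>h 1 - chord 1\<bar> \<le> 1"
      using h_bounds[of 1] chord_bounds[of 1] N_ge_2 by auto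
    also have "\<dots> \<le> 2 * \<delta> * (harm N + 1)" using False by simp
    also have "\<dots> \<le> (2 * (K + q) / q + 2) * \<delta> * (harm N + 1)"
      using q_pos \<delta>_pos K_nonneg H by (intro mult_right_mono) auto
    finally show ?thesis .
  qed
  then show ?thesis unfolding chord_1 by (simp add: algebra_simps)
qed

end

context nonneg_rates
begin

lemma incl_rate_zeta_other_le:
  assumes "k \<le> N" "(u, v) \<notin> {(x, y), (y, x)}"
  shows "incl_rate d r N (zeta N k x y) u v \<le> real N * d N * r u v"
proof (cases "u = v")
  case False
  have "zeta N k x y u = 0 \<or> zeta N k x y v = 0"
    using assms(2) False by (auto simp: zeta_def)
  then have "incl_rate d r N (zeta N k x y) u v \<le> real (zeta N k x y u) * (d N * r u v)"
    using r_nonneg d_nonneg False by (auto simp: incl_rate_def)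
  also have "\<dots> \<le> real N * (d N * r u v)"
    using assms r_nonneg d_nonneg by (intro mult_right_mono) (auto simp: zeta_def)
  finally show ?thesis by simp
qed (simp add: incl_rate_def r_nonneg d_nonneg)

lemma hit_prob_zeta_leaky_birth_death:
  assumes d_pos: "d N > 0" and N_ge_2: "N \<ge> 2"
    and xy: "x \<noteq> y" and r_sym: "r x y = r y x" and r_pos: "r x y > 0"
    and zeta_notin: "\<And>k. 0 < k \<Longrightarrow> k < N \<Longrightarrow> zeta N k x y \<notin> C"
  obtains c e where "leaky_birth_death N (r x y) (d N) (\<Sum>(u, v)\<in>UNIV. r u v)
    (\<lambda>k. hit_prob d r N C B (zeta N k x y)) c e"
proof
  define h where "h k = hit_prob d r N C B (zeta N k x y)" for k
  define Other where "Other = UNIV - {(x, y), (y, x)}"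
  define c where "c k = (\<Sum>(u, v)\<in>Other. incl_rate d r N (zeta N k x y) u v)" for k
  define e where "e k = (\<Sum>(u, v)\<in>Other.
    incl_rate d r N (zeta N k x y) u v * hit_prob d r N C B (move u v (zeta N k x y)))" for k
  show "leaky_birth_death N (r x y) (d N) (\<Sum>(u, v)\<in>UNIV. r u v) h c e"
  proof
    fix k assume k: "0 < k" "k < N"
    let ?z = "zeta N k x y"
    have up: "incl_rate d r N ?z x y = up_rate (r x y) (d N) N k"
      using xy k by (simp add: incl_rate_def zeta_def up_rate_def)
    have down: "incl_rate d r N ?z y x = down_rate (r x y) (d N) N k"
      using xy k by (simp add: incl_rate_def zeta_def down_rate_def r_sym mult_ac)
    have total: "incl_total_rate d r N ?z = up_rate (r x y) (d N) N k + down_rate (r x y) (d N) N k + c k"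
      unfolding incl_total_rate_def sum_sum_split_pair[OF xy] up down c_def Other_def ..
    have "0 \<le> e k" "e k \<le> c k"
      unfolding e_def c_def using hit_prob_bounds incl_rate_nonneg
      by (auto intro!: sum_nonneg sum_mono mult_nonneg_nonneg mult_right_le_one_le)
    moreover have "c k \<le> (\<Sum>(u, v)\<in>Other. real N * d N * r u v)"
      unfolding c_def Other_def using k by (intro sum_mono) (auto intro!: incl_rate_zeta_other_le)
    moreover have "(\<Sum>(u, v)\<in>Other. real N * d N * r u v) \<le> real N * d N * (\<Sum>(u, v)\<in>UNIV. r u v)"
      unfolding Other_def using r_nonneg d_nonneg
      by (auto simp: sum_distrib_left case_prod_unfold intro!: sum_mono2 mult_nonneg_nonneg)
    ultimately show "0 \<le> e k \<and> e k \<le> c k \<and> c k \<le> real N * d N * (\<Sum>(u, v)\<in>UNIV. r u v)"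
      by linarith
    have "incl_total_rate d r N ?z > 0"
      unfolding total using \<open>0 \<le> e k\<close> \<open>e k \<le> c k\<close> k d_pos r_pos
      by (simp add: up_rate_def down_rate_def add_pos_nonneg)
    then have "incl_total_rate d r N ?z * h k = (\<Sum>u\<in>UNIV. \<Sum>v\<in>UNIV.
        incl_rate d r N ?z u v * hit_prob d r N C B (move u v ?z))"
      unfolding h_def hit_prob_step[OF zeta_notin[OF k]] sum_distrib_left by (simp add: field_simps)
    also have "\<dots> = up_rate (r x y) (d N) N k * h (k + 1) + down_rate (r x y) (d N) N k * h (k - 1) + e k"
      unfolding sum_sum_split_pair[OF xy] up down e_def Other_def h_def
        move_zeta_forward[OF xy k(2)] move_zeta_backward[OF xy k(1) less_imp_le[OF k(2)]] ..
    finally show "tridiag_op (\<lambda>j. up_rate (r x y) (d N) N j + down_rate (r x y) (d N) N j + c j)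
        (up_rate (r x y) (d N) N) (down_rate (r x y) (d N) N) h k = e k"
      unfolding tridiag_op_def total by simp
  qed (use N_ge_2 r_pos d_pos r_nonneg hit_prob_bounds in \<open>auto simp: h_def intro: sum_nonneg\<close>)
qed

end

lemma harm_le_1_plus_ln: "N \<ge> 1 \<Longrightarrow> harm N \<le> 1 + ln (real N)"
proof -
  assume "N \<ge> 1"
  then obtain n where n: "N = Suc n" by (cases N) auto
  have "harm (Suc n) - ln (real (Suc n)) \<le> harm (Suc 0) - ln (real (Suc 0))"
    using decseq_harm_diff_ln unfolding decseq_def by (metis le0)
  then show ?thesis unfolding n by (simp add: harm_def)
qed

lemma harm_plus_1_bigo_ln: "(\<lambda>N. harm N + 1 :: real) \<in> O(\<lambda>N. ln (real N))"
proof (intro bigoI[of _ 3] eventually_sequentiallyI[of 3])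
  fix N :: nat assume N: "N \<ge> 3"
  have "exp 1 \<le> real N" using exp_le N by linarith
  then have "1 \<le> ln (real N)" using ln_mono[of "exp 1" "real N"] by simp
  then show "norm (harm N + 1 :: real) \<le> 3 * norm (ln (real N))"
    using harm_le_1_plus_ln[of N] harm_nonneg[of N, where 'a = real] N by simp
qed

theorem lemma4p10:
  fixes r :: "'s::finite \<Rightarrow> 's \<Rightarrow> real" and d :: "nat \<Rightarrow> real"
    and A :: "'s set" and w x y :: 's
  assumes r_nonneg: "\<And>a b. r a b \<ge> 0"
    and r_diag: "\<And>a. r a a = 0"
    and r_irred: "\<And>a b. (a, b) \<in> {(u, v). r u v > 0}\<^sup>*"
    and d_pos: "\<And>N. d N > 0"
    and d_lim: "d \<longlonglongrightarrow> 0"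
    and wA: "w \<in> A"
    and xy: "x \<noteq> y" and r_sym: "r x y = r y x" and r_pos: "r x y > 0"
  shows "(\<lambda>N. \<bar>E0_prob d r N A w (zeta N 1 x y)
                 - real (N - 1) / real N * E0_prob d r N A w (xi N x)
                 - 1 / real N * E0_prob d r N A w (xi N y)\<bar>)
         \<in> O(\<lambda>N. d N * ln (real N))"
proof -
  interpret nonneg_rates r d
    using r_nonneg d_pos by unfold_locales (simp_all add: less_imp_le)
  define K where "K = (\<Sum>(u, v)\<in>UNIV. r u v)"
  define C where "C = 2 * (K + r x y) / r x y + 2"
  have "\<bar>E0_prob d r N A w (zeta N 1 x y)
                 - real (N - 1) / real N * E0_prob d r N A w (xi N x)
                 - 1 / real N * E0_prob d r N A w (xi N y)\<bar> \<le> C * (d N * (harm N + 1))"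
    if N: "N \<ge> 2" for N
  proof -
    obtain c e where
      "leaky_birth_death N (r x y) (d N) K (\<lambda>k. E0_prob d r N A w (zeta N k x y)) c e"
      using hit_prob_zeta_leaky_birth_death[OF d_pos N xy r_sym r_pos zeta_notin_condensate[OF xy]]
      unfolding E0_prob_def K_def by blast
    from leaky_birth_death.deviation_at_1[OF this] show ?thesis
      unfolding zeta_0 zeta_self[OF xy] C_def by (simp only: mult.assoc)
  qed
  then have "(\<lambda>N. \<bar>E0_prob d r N A w (zeta N 1 x y)
                 - real (N - 1) / real N * E0_prob d r N A w (xi N x)
                 - 1 / real N * E0_prob d r N A w (xi N y)\<bar>) \<in> O(\<lambda>N. d N * (harm N + 1))"
    using d_pos harm_nonneg[where 'a = real]
    by (intro bigoI[of _ C] eventually_sequentiallyI[of 2]) (simp add: abs_mult less_imp_le)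
  also have "(\<lambda>N. d N * (harm N + 1)) \<in> O(\<lambda>N. d N * ln (real N))"
    by (intro landau_o.big.mult_left harm_plus_1_bigo_ln)
  finally show ?thesis .
qed

end
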